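(* For the cycle $C_n$ on $n\ge 3$ vertices: $IDI(C_n)=2$ if $n\ge 6$, and $IDI(C_3)=IDI(C_4)=IDI(C_5)=3$.
   Context: For a finite simple connected graph $G=(V,E)$ with diameter $d$, a rank assignment is a function $f:V\to\mathbb{R}$; under $f$, the string of a vertex $v$ is the $d$-vector whose $i$-th coordinate is the sum of $f(w)$ over all vertices $w$ with $d(v,w)=i$. The ID-index $IDI(G)$ is the minimum $k$ such that there exists $f:V\to\mathbb{R}$ with $|f(V)|=k$ under which all vertices have distinct strings. *)

theory Defs
  imports Main Complex_Main
begin

definition simple_graph :: "'a set \<Rightarrow> ('a \<times> 'a) set \<Rightarrow> bool" where
  "simple_graph V E \<longleftrightarrow> finite V \<and> E \<subseteq> V \<times> V \<and> sym E \<and> irrefl E"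

definition connected_graph :: "'a set \<Rightarrow> ('a \<times> 'a) set \<Rightarrow> bool" where
  "connected_graph V E \<longleftrightarrow> V \<noteq> {} \<and> (\<forall>u\<in>V. \<forall>v\<in>V. (u, v) \<in> E\<^sup>*)"

definition gdist :: "('a \<times> 'a) set \<Rightarrow> 'a \<Rightarrow> 'a \<Rightarrow> nat" where
  "gdist E u v = (LEAST k. (u, v) \<in> E ^^ k)"

definition diameter :: "'a set \<Rightarrow> ('a \<times> 'a) set \<Rightarrow> nat" where
  "diameter V E = Max {gdist E u v | u v. u \<in> V \<and> v \<in> V}"

definition vstring :: "'a set \<Rightarrow> ('a \<times> 'a) set \<Rightarrow> ('a \<Rightarrow> real) \<Rightarrow> 'a \<Rightarrow> real list" where
  "vstring V E f v = map (\<lambda>i. \<Sum>w\<in>{w\<in>V. gdist E v w = i}. f w) [1..<diameter V E + 1]"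

definition IDI :: "'a set \<Rightarrow> ('a \<times> 'a) set \<Rightarrow> nat" where
  "IDI V E = (LEAST k. \<exists>f :: 'a \<Rightarrow> real. card (f ` V) = k \<and> inj_on (vstring V E f) V)"

definition cycle_edges :: "nat \<Rightarrow> (nat \<times> nat) set" where
  "cycle_edges n = {(i, j). i < n \<and> j < n \<and> (j = (i + 1) mod n \<or> i = (j + 1) mod n)}"

end

theory Submission
  imports Defs "HOL-Library.Multiset" "HOL-Library.Indicator_Function"
begin

(* Under the indicator function of a vertex set S, the string of v counts the members of S at
   each distance i >= 1 from v; as the size of S is known, it determines the multiset of
   distances from v to S. On C_n with n >= 6 the multiset of distances to S = {0, 1, 3}
   determines the vertex (a case analysis on the piecewise linear distance functions), so two
   ranks suffice, whereas one rank never does because the cycle is vertex-transitive.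
   For n = 3, 4, 5 an enumeration of all two-valued assignments shows that two strings always
   coincide, while ranking the last two vertices 1 and 2 and all others 0 separates them. *)

lemma count_image_mset_mset_set:
  "finite A \<Longrightarrow> count (image_mset f (mset_set A)) x = card {a \<in> A. f a = x}"
  by (simp add: count_conv_size_mset filter_mset_image_mset filter_mset_mset_set)

lemma multiset_eqI_size_except:
  assumes "size M = size N" "\<And>x. x \<noteq> a \<Longrightarrow> count M x = count N x"
  shows "M = N"
proof -
  have size_split: "size K = count K a + size {#x \<in># K. x \<noteq> a#}" for K :: "'a multiset"
    by (metis filter_eq_replicate_mset multiset_partition size_replicate_mset size_union)
  have "{#x \<in># M. x \<noteq> a#} = {#x \<in># N. x \<noteq> a#}"
    using assms(2) by (intro multiset_eqI) simp
  then have "count M a = count N a"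
    using assms(1) size_split[of M] size_split[of N] by simp
  with assms(2) show ?thesis
    by (metis multiset_eqI)
qed

lemma mset3_eq_cases:
  assumes "{#a, b, c#} = {#x, y, z#}"
  obtains "x = a" "y = b" "z = c" | "x = a" "y = c" "z = b" | "x = b" "y = a" "z = c"
    | "x = b" "y = c" "z = a" | "x = c" "y = a" "z = b" | "x = c" "y = b" "z = a"
  using assms by (auto simp: add_eq_conv_ex)

lemma card_le_2_subset_doubleton:
  assumes "finite A" "card A \<le> 2"
  obtains a b where "A \<subseteq> {a, b}"
proof -
  consider "card A = 0" | "card A = 1" | "card A = 2"
    using assms(2) by linarith
  then show ?thesis
    by cases (use assms(1) that in \<open>auto simp: card_1_singleton_iff card_2_iff\<close>)
qed

lemma inj_on_atLeast0LessThan_iff_distinct: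
  "inj_on h {0..<n} \<longleftrightarrow> distinct (map h [0..<n])"
  by (simp add: distinct_map)

lemma IDI_eqI:
  assumes "card (f ` V) = k" "inj_on (vstring V E f) V"
    and "\<And>g. inj_on (vstring V E g) V \<Longrightarrow> k \<le> card (g ` V)"
  shows "IDI V E = k"
  unfolding IDI_def
proof (rule Least_equality)
  show "\<exists>f. card (f ` V) = k \<and> inj_on (vstring V E f) V"
    using assms(1,2) by blast
qed (use assms(3) in blast)

lemma gdist_le_diameter:
  assumes "finite V" "u \<in> V" "v \<in> V"
  shows "gdist E u v \<le> diameter V E"
proof -
  have "{gdist E u v | u v. u \<in> V \<and> v \<in> V} =
      (\<lambda>(u, v). gdist E u v) ` (V \<times> V)"
    by auto
  then show ?thesis
    unfolding diameter_def using assms by (intro Max_ge) auto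
qed

lemma vstring_indicator:
  assumes "finite V" "S \<subseteq> V"
  shows "vstring V E (indicator S) v =
    map (\<lambda>i. real (card {s \<in> S. gdist E v s = i})) [1..<diameter V E + 1]"
  unfolding vstring_def
proof (rule map_cong[OF refl])
  fix i
  have "(\<Sum>w\<in>{w \<in> V. gdist E v w = i}. indicator S w) =
      real (card ({w \<in> V. gdist E v w = i} \<inter> S))"
    using assms(1) by (simp add: indicator_def Int_def)
  also have "{w \<in> V. gdist E v w = i} \<inter> S = {s \<in> S. gdist E v s = i}"
    using assms(2) by blast
  finally show "(\<Sum>w\<in>{w \<in> V. gdist E v w = i}. indicator S w) =
      real (card {s \<in> S. gdist E v s = i})" .
qed

(* The string records only the distances >= 1; the number of members of S at distance 0
   is recovered from the size of S. *)
lemma distance_mset_eq_if_vstring_indicator_eq: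
  assumes "finite V" "S \<subseteq> V" "u \<in> V" "v \<in> V"
    and "vstring V E (indicator S) u = vstring V E (indicator S) v"
  shows "image_mset (gdist E u) (mset_set S) = image_mset (gdist E v) (mset_set S)"
proof (rule multiset_eqI_size_except[where a = 0])
  have "finite S"
    using assms(1,2) by (rule finite_subset[rotated])
  fix i :: nat
  assume "i \<noteq> 0"
  show "count (image_mset (gdist E u) (mset_set S)) i =
      count (image_mset (gdist E v) (mset_set S)) i"
  proof (cases "i \<le> diameter V E")
    case True
    from assms(5) have "\<forall>j \<in> set [1..<diameter V E + 1].
        real (card {s \<in> S. gdist E u s = j}) = real (card {s \<in> S. gdist E v s = j})"
      unfolding vstring_indicator[OF assms(1,2)] map_eq_conv .
    moreover have "i \<in> set [1..<diameter V E + 1]"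
      using True \<open>i \<noteq> 0\<close> by auto
    ultimately have "real (card {s \<in> S. gdist E u s = i}) =
        real (card {s \<in> S. gdist E v s = i})"
      by blast
    with \<open>finite S\<close> show ?thesis
      by (simp add: count_image_mset_mset_set)
  next
    case False
    then have "{s \<in> S. gdist E w s = i} = {}" if "w \<in> V" for w
      using gdist_le_diameter[OF assms(1) that] assms(2) by fastforce
    with assms(3,4) have "{s \<in> S. gdist E u s = i} = {}" "{s \<in> S. gdist E v s = i} = {}"
      by blast+
    with \<open>finite S\<close> show ?thesis
      by (simp only: count_image_mset_mset_set card.empty)
  qed
qed simp

definition cycle_dist :: "nat \<Rightarrow> nat \<Rightarrow> nat \<Rightarrow> nat" where
  "cycle_dist n i j =
    min (if i \<le> j then j - i else i - j) (n - (if i \<le> j then j - i else i - j))"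

lemma cycle_edge_iff:
  "(i, j) \<in> cycle_edges n \<longleftrightarrow> i < n \<and> j < n \<and>
     (j = (if i + 1 = n then 0 else i + 1) \<or> i = (if j + 1 = n then 0 else j + 1))"
  by (auto simp: cycle_edges_def mod_if)

lemma cycle_dist_le_walk_length:
  assumes "(i, j) \<in> cycle_edges n ^^ k" "i < n"
  shows "cycle_dist n i j \<le> k"
  using assms(1)
proof (induction k arbitrary: j)
  case 0
  then show ?case by (simp add: cycle_dist_def)
next
  case (Suc k)
  then obtain m where "(i, m) \<in> cycle_edges n ^^ k" "(m, j) \<in> cycle_edges n"
    by auto
  with Suc.IH assms(2) show ?case
    by (fastforce simp: cycle_edge_iff cycle_dist_def split: if_splits)
qed

lemma cycle_walk_forward: "i < n \<Longrightarrow> (i, (i + k) mod n) \<in> cycle_edges n ^^ k"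
proof (induction k)
  case (Suc k)
  then have "((i + k) mod n, (i + Suc k) mod n) \<in> cycle_edges n"
    by (auto simp: cycle_edges_def mod_Suc_eq)
  with Suc show ?case by auto
qed simp

lemma cycle_walk_backward: "i < n \<Longrightarrow> ((i + k) mod n, i) \<in> cycle_edges n ^^ k"
proof (induction k)
  case (Suc k)
  then have "((i + Suc k) mod n, (i + k) mod n) \<in> cycle_edges n"
    by (auto simp: cycle_edges_def mod_Suc_eq)
  with Suc show ?case by (metis relpow_Suc_I2)
qed simp

lemma cycle_dist_mod_cases:
  assumes "i < n" "j < n"
  shows "(i + cycle_dist n i j) mod n = j \<or> (j + cycle_dist n i j) mod n = i"
  using assms by (auto simp: cycle_dist_def min_def le_mod_geq)

lemma gdist_cycle:
  assumes "i < n" "j < n"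
  shows "gdist (cycle_edges n) i j = cycle_dist n i j"
  unfolding gdist_def
proof (rule Least_equality)
  show "(i, j) \<in> cycle_edges n ^^ cycle_dist n i j"
    using cycle_dist_mod_cases[OF assms] cycle_walk_forward[OF assms(1)]
      cycle_walk_backward[OF assms(2)]
    by metis
qed (use cycle_dist_le_walk_length assms in blast)

lemma diameter_cycle:
  assumes "0 < n"
  shows "diameter {0..<n} (cycle_edges n) = n div 2"
  unfolding diameter_def
proof (rule Max_eqI)
  show "finite {gdist (cycle_edges n) u v |u v. u \<in> {0..<n} \<and> v \<in> {0..<n}}"
    by (simp add: finite_image_set2)
  have "gdist (cycle_edges n) 0 (n div 2) = n div 2"
    using assms by (simp add: gdist_cycle cycle_dist_def)
  moreover have "0 \<in> {0..<n}" "n div 2 \<in> {0..<n}"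
    using assms by simp_all
  ultimately show
    "n div 2 \<in> {gdist (cycle_edges n) u v |u v. u \<in> {0..<n} \<and> v \<in> {0..<n}}"
    by (metis (mono_tags, lifting) mem_Collect_eq)
qed (auto simp: gdist_cycle cycle_dist_def)

lemma vstring_cycle:
  assumes "0 < n" "v < n"
  shows "vstring {0..<n} (cycle_edges n) f v =
    map (\<lambda>i. \<Sum>w<n. if cycle_dist n v w = i then f w else 0) [1..<n div 2 + 1]"
  unfolding vstring_def diameter_cycle[OF assms(1)]
proof (rule map_cong[OF refl])
  fix i
  have "(\<Sum>w\<in>{w \<in> {0..<n}. gdist (cycle_edges n) v w = i}. f w) =
      (\<Sum>w\<in>{w \<in> {0..<n}. cycle_dist n v w = i}. f w)"
    using assms(2) by (intro sum.cong) (auto simp: gdist_cycle)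
  also have "\<dots> = (\<Sum>w\<in>{0..<n}. if cycle_dist n v w = i then f w else 0)"
    by (rule sum.inter_filter) simp
  finally show "(\<Sum>w\<in>{w \<in> {0..<n}. gdist (cycle_edges n) v w = i}. f w) =
      (\<Sum>w<n. if cycle_dist n v w = i then f w else 0)"
    by (simp add: lessThan_atLeast0)
qed

lemma cycle_dist_rotate:
  assumes "v < n" "w < n"
  shows "cycle_dist n v ((w + v) mod n) = cycle_dist n 0 w"
  using assms by (cases "w + v < n") (auto simp: cycle_dist_def min_def le_mod_geq)

lemma sum_cycle_dist_rotate:
  assumes "v < n"
  shows "(\<Sum>w<n. h (cycle_dist n v w)) = (\<Sum>w<n. h (cycle_dist n 0 w))"
proof (rule sym, rule sum.reindex_bij_witness[where j = "\<lambda>w. (w + v) mod n"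
      and i = "\<lambda>w. (w + (n - v)) mod n"])
  fix w assume "w \<in> {..<n}"
  with assms show "((w + v) mod n + (n - v)) mod n = w" "((w + (n - v)) mod n + v) mod n = w"
    by (subst mod_add_left_eq, simp)+
  from \<open>w \<in> {..<n}\<close> assms
  show "h (cycle_dist n v ((w + v) mod n)) = h (cycle_dist n 0 w)"
    by (simp add: cycle_dist_rotate)
qed (use assms in auto)

lemma vstring_cycle_const:
  assumes "\<And>w. w < n \<Longrightarrow> f w = c" "v < n"
  shows "vstring {0..<n} (cycle_edges n) f v = vstring {0..<n} (cycle_edges n) f 0"
proof -
  have "(\<Sum>w<n. if cycle_dist n v w = i then f w else 0) =
      (\<Sum>w<n. if cycle_dist n 0 w = i then f w else 0)" for i
  proof -
    have "(\<Sum>w<n. if cycle_dist n v w = i then f w else 0) =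
        (\<Sum>w<n. (\<lambda>d. if d = i then c else 0) (cycle_dist n v w))"
      using assms(1) by (intro sum.cong) auto
    also have "\<dots> = (\<Sum>w<n. (\<lambda>d. if d = i then c else 0) (cycle_dist n 0 w))"
      by (rule sum_cycle_dist_rotate[OF assms(2)])
    also have "\<dots> = (\<Sum>w<n. if cycle_dist n 0 w = i then f w else 0)"
      using assms(1) by (intro sum.cong) auto
    finally show ?thesis .
  qed
  with assms(2) show ?thesis
    by (simp add: vstring_cycle)
qed

lemma two_le_card_if_inj_vstring_cycle:
  assumes "2 \<le> n" "inj_on (vstring {0..<n} (cycle_edges n) f) {0..<n}"
  shows "2 \<le> card (f ` {0..<n})"
proof (rule ccontr)
  assume "\<not> 2 \<le> card (f ` {0..<n})"
  moreover have "0 < card (f ` {0..<n})"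
    using assms(1) by (simp add: card_gt_0_iff)
  ultimately have "card (f ` {0..<n}) = 1"
    by linarith
  then obtain c where "f ` {0..<n} = {c}"
    by (rule card_1_singletonE)
  then have "vstring {0..<n} (cycle_edges n) f 1 = vstring {0..<n} (cycle_edges n) f 0"
    using assms(1) by (intro vstring_cycle_const[where c = c]) auto
  with assms show False
    by (auto dest: inj_onD)
qed

lemma cycle_dist_cases:
  assumes "j \<le> i" "i < n"
  shows "2 * (i - j) \<le> n \<and> cycle_dist n i j + j = i \<or>
    n < 2 * (i - j) \<and> cycle_dist n i j + i = n + j"
  using assms by (auto simp: cycle_dist_def min_def)

(* For u >= 3 the shortest route from u to j in {0, 1, 3} runs downwards while 2 u <= n + 2 j
   and upwards through 0 beyond that, which cuts the range of u into four regions. *)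

lemma cycle_dist_013_cases:
  assumes "6 \<le> n" "u < n"
  obtains "u = 0" "cycle_dist n u 0 = 0" "cycle_dist n u 1 = 1" "cycle_dist n u 3 = 3"
  | "u = 1" "cycle_dist n u 0 = 1" "cycle_dist n u 1 = 0" "cycle_dist n u 3 = 2"
  | "u = 2" "cycle_dist n u 0 = 2" "cycle_dist n u 1 = 1" "cycle_dist n u 3 = 1"
  | "3 \<le> u" "2 * u \<le> n"
    "cycle_dist n u 0 = u" "cycle_dist n u 1 + 1 = u" "cycle_dist n u 3 + 3 = u"
  | "n < 2 * u" "2 * u \<le> n + 2"
    "cycle_dist n u 0 + u = n" "cycle_dist n u 1 + 1 = u" "cycle_dist n u 3 + 3 = u"
  | "n + 2 < 2 * u" "2 * u \<le> n + 6"
    "cycle_dist n u 0 + u = n" "cycle_dist n u 1 + u = n + 1" "cycle_dist n u 3 + 3 = u"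
  | "n + 6 < 2 * u"
    "cycle_dist n u 0 + u = n" "cycle_dist n u 1 + u = n + 1" "cycle_dist n u 3 + u = n + 3"
proof (cases "u < 3")
  case True
  then consider "u = 0" | "u = 1" | "u = 2" by linarith
  then show ?thesis using that assms by cases (auto simp: cycle_dist_def)
next
  case False
  then have "0 \<le> u" "1 \<le> u" "3 \<le> u" by simp_all
  then have d0: "2 * u \<le> n \<and> cycle_dist n u 0 = u \<or>
      n < 2 * u \<and> cycle_dist n u 0 + u = n"
    and d1: "2 * u \<le> n + 2 \<and> cycle_dist n u 1 + 1 = u \<or>
      n + 2 < 2 * u \<and> cycle_dist n u 1 + u = n + 1"
    and d3: "2 * u \<le> n + 6 \<and> cycle_dist n u 3 + 3 = u \<or>
      n + 6 < 2 * u \<and> cycle_dist n u 3 + u = n + 3"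
    using cycle_dist_cases[of _ u n] \<open>u < n\<close> by fastforce+
  consider "2 * u \<le> n" | "n < 2 * u" "2 * u \<le> n + 2" | "n + 2 < 2 * u" "2 * u \<le> n + 6"
    | "n + 6 < 2 * u" by linarith
  then show ?thesis
  proof cases
    case 1
    with d0 d1 d3 \<open>3 \<le> u\<close> show ?thesis by (intro that(4)) auto
  next
    case 2
    with d0 d1 d3 show ?thesis by (intro that(5)) auto
  next
    case 3
    with d0 d1 d3 show ?thesis by (intro that(6)) auto
  next
    case 4
    with d0 d1 d3 show ?thesis by (intro that(7)) auto
  qed
qed

lemma cycle_dist_013_inj:
  assumes n: "6 \<le> n" and u: "u < n" and v: "v < n"
    and eq: "{#cycle_dist n u 0, cycle_dist n u 1, cycle_dist n u 3#} =
      {#cycle_dist n v 0, cycle_dist n v 1, cycle_dist n v 3#}"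
  shows "u = v"
  by (rule mset3_eq_cases[OF eq];
      cases rule: cycle_dist_013_cases[OF n u];
      cases rule: cycle_dist_013_cases[OF n v];
      use n u v in linarith)

lemma distance_mset_cycle_013:
  assumes "6 \<le> n" "u < n"
  shows "image_mset (gdist (cycle_edges n) u) (mset_set {0, 1, 3}) =
    {#cycle_dist n u 0, cycle_dist n u 1, cycle_dist n u 3#}"
  using assms by (simp add: gdist_cycle)

lemma inj_vstring_cycle_indicator_013:
  assumes "6 \<le> n"
  shows "inj_on (vstring {0..<n} (cycle_edges n) (indicator {0, 1, 3})) {0..<n}"
proof (rule inj_onI)
  fix u v
  assume uv: "u \<in> {0..<n}" "v \<in> {0..<n}"
    and "vstring {0..<n} (cycle_edges n) (indicator {0, 1, 3}) u =
      vstring {0..<n} (cycle_edges n) (indicator {0, 1, 3}) v"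
  then have "image_mset (gdist (cycle_edges n) u) (mset_set {0, 1, 3}) =
      image_mset (gdist (cycle_edges n) v) (mset_set {0, 1, 3})"
    using assms by (intro distance_mset_eq_if_vstring_indicator_eq) auto
  moreover have "u < n" "v < n"
    using uv by simp_all
  ultimately show "u = v"
    using assms by (metis cycle_dist_013_inj distance_mset_cycle_013)
qed

lemma IDI_cycle_ge_6:
  assumes "6 \<le> n"
  shows "IDI {0..<n} (cycle_edges n) = 2"
proof (rule IDI_eqI[where f = "indicator {0, 1, 3}"])
  have "indicator {0, 1, 3} ` {0..<n} = {0, 1 :: real}"
  proof
    show "indicator {0, 1, 3} ` {0..<n} \<subseteq> {0, 1 :: real}"
      by (auto simp: indicator_def)
    have "indicator {0, 1, 3} (2 :: nat) = (0 :: real)"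
      "indicator {0, 1, 3} (0 :: nat) = (1 :: real)"
      by (simp_all add: indicator_def)
    moreover have "2 \<in> {0..<n}" "0 \<in> {0..<n}"
      using assms by simp_all
    ultimately show "{0, 1 :: real} \<subseteq> indicator {0, 1, 3} ` {0..<n}"
      by (metis empty_subsetI image_eqI insert_subset)
  qed
  then show "card (indicator {0, 1, 3} ` {0..<n} :: real set) = 2"
    by simp
  show "inj_on (vstring {0..<n} (cycle_edges n) (indicator {0, 1, 3})) {0..<n}"
    using assms by (rule inj_vstring_cycle_indicator_013)
next
  fix g :: "nat \<Rightarrow> real"
  assume "inj_on (vstring {0..<n} (cycle_edges n) g) {0..<n}"
  with assms show "2 \<le> card (g ` {0..<n})"
    by (intro two_le_card_if_inj_vstring_cycle) simp_all
qed

lemma inj_vstring_cycle_3_iff: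
  "inj_on (vstring {0..<3} (cycle_edges 3) f) {0..<3} \<longleftrightarrow>
    distinct [[f 1 + f 2], [f 0 + f 2], [f 0 + f 1]]"
proof -
  have "[0..<3] = [0, 1, 2 :: nat]"
    by (simp add: upt_rec)
  moreover have "map (vstring {0..<3} (cycle_edges 3) f) [0, 1, 2] =
      [[f 1 + f 2], [f 0 + f 2], [f 0 + f 1]]"
    by (simp add: vstring_cycle cycle_dist_def lessThan_nat_numeral upt_rec ac_simps)
  ultimately show ?thesis
    by (simp only: inj_on_atLeast0LessThan_iff_distinct)
qed

lemma inj_vstring_cycle_4_iff:
  "inj_on (vstring {0..<4} (cycle_edges 4) f) {0..<4} \<longleftrightarrow>
    distinct [[f 1 + f 3, f 2], [f 0 + f 2, f 3], [f 1 + f 3, f 0], [f 0 + f 2, f 1]]"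
proof -
  have "[0..<4] = [0, 1, 2, 3 :: nat]"
    by (simp add: upt_rec)
  moreover have "map (vstring {0..<4} (cycle_edges 4) f) [0, 1, 2, 3] =
      [[f 1 + f 3, f 2], [f 0 + f 2, f 3], [f 1 + f 3, f 0], [f 0 + f 2, f 1]]"
    by (simp add: vstring_cycle cycle_dist_def lessThan_nat_numeral upt_rec ac_simps)
  ultimately show ?thesis
    by (simp only: inj_on_atLeast0LessThan_iff_distinct)
qed

lemma inj_vstring_cycle_5_iff:
  "inj_on (vstring {0..<5} (cycle_edges 5) f) {0..<5} \<longleftrightarrow>
    distinct [[f 1 + f 4, f 2 + f 3], [f 0 + f 2, f 3 + f 4], [f 1 + f 3, f 0 + f 4],
      [f 2 + f 4, f 0 + f 1], [f 0 + f 3, f 1 + f 2]]"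
proof -
  have "[0..<5] = [0, 1, 2, 3, 4 :: nat]"
    by (simp add: upt_rec)
  moreover have "map (vstring {0..<5} (cycle_edges 5) f) [0, 1, 2, 3, 4] =
      [[f 1 + f 4, f 2 + f 3], [f 0 + f 2, f 3 + f 4], [f 1 + f 3, f 0 + f 4],
       [f 2 + f 4, f 0 + f 1], [f 0 + f 3, f 1 + f 2]]"
    by (simp add: vstring_cycle cycle_dist_def lessThan_nat_numeral upt_rec ac_simps)
  ultimately show ?thesis
    by (simp only: inj_on_atLeast0LessThan_iff_distinct)
qed

lemma small_cycle_two_values_not_inj:
  assumes "n \<in> {3, 4, 5}" "g ` {0..<n} \<subseteq> {a, b}"
  shows "\<not> inj_on (vstring {0..<n} (cycle_edges n) g) {0..<n}"
proof -
  have g: "g w = a \<or> g w = b" if "w < n" for w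
    using assms(2) that by (auto simp: image_subset_iff)
  from assms(1) consider "n = 3" | "n = 4" | "n = 5"
    by blast
  then show ?thesis
  proof cases
    case 1
    with g have "g 0 = a \<or> g 0 = b" "g 1 = a \<or> g 1 = b" "g 2 = a \<or> g 2 = b"
      by simp_all
    then show ?thesis
      unfolding 1 inj_vstring_cycle_3_iff by (elim disjE) (simp_all add: ac_simps)
  next
    case 2
    with g have "g 0 = a \<or> g 0 = b" "g 1 = a \<or> g 1 = b" "g 2 = a \<or> g 2 = b"
        "g 3 = a \<or> g 3 = b"
      by simp_all
    then show ?thesis
      unfolding 2 inj_vstring_cycle_4_iff by (elim disjE) (simp_all add: ac_simps)
  next
    case 3
    with g have "g 0 = a \<or> g 0 = b" "g 1 = a \<or> g 1 = b" "g 2 = a \<or> g 2 = b"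
        "g 3 = a \<or> g 3 = b" "g 4 = a \<or> g 4 = b"
      by simp_all
    then show ?thesis
      unfolding 3 inj_vstring_cycle_5_iff by (elim disjE) (simp_all add: ac_simps)
  qed
qed

lemma IDI_small_cycle:
  assumes "n \<in> {3, 4, 5}"
  shows "IDI {0..<n} (cycle_edges n) = 3"
proof -
  let ?f = "\<lambda>w. if w + 2 = n then 1 else if w + 1 = n then 2 else 0 :: real"
  show ?thesis
  proof (rule IDI_eqI[where f = ?f])
    have "{0..<3 :: nat} = {0, 1, 2}" "{0..<4 :: nat} = {0, 1, 2, 3}"
      "{0..<5 :: nat} = {0, 1, 2, 3, 4}"
      by auto
    with assms show "card (?f ` {0..<n}) = 3"
      by auto
    from assms show "inj_on (vstring {0..<n} (cycle_edges n) ?f) {0..<n}"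
      by (auto simp: inj_vstring_cycle_3_iff inj_vstring_cycle_4_iff inj_vstring_cycle_5_iff)
  next
    fix g :: "nat \<Rightarrow> real"
    assume inj: "inj_on (vstring {0..<n} (cycle_edges n) g) {0..<n}"
    show "3 \<le> card (g ` {0..<n})"
    proof (rule ccontr)
      assume "\<not> 3 \<le> card (g ` {0..<n})"
      then have "card (g ` {0..<n}) \<le> 2"
        by simp
      then obtain a b where "g ` {0..<n} \<subseteq> {a, b}"
        by (metis card_le_2_subset_doubleton finite_atLeastLessThan finite_imageI)
      with assms inj show False
        using small_cycle_two_values_not_inj by blast
    qed
  qed
qed

theorem mainTheorem9:
  "(\<forall>n::nat. n \<ge> 6 \<longrightarrow> IDI {0..<n} (cycle_edges n) = 2)
   \<and> IDI {0..<3} (cycle_edges 3) = 3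
   \<and> IDI {0..<4} (cycle_edges 4) = 3
   \<and> IDI {0..<5} (cycle_edges 5) = 3"
  using IDI_cycle_ge_6 IDI_small_cycle[of 3] IDI_small_cycle[of 4] IDI_small_cycle[of 5]
  by simp

end
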